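(* Let $P_n(x)$ be a real polynomial all of whose roots are real, with $m\ge 3$ distinct roots $p_1<\dots<p_m$. Let $\mu=\min_{i\ne j}|p_i-p_j|$ and $M=\max_{i,j}|p_i-p_j|$. Define $$\mu_0^2=\Big[\sum_{1\le i<j\le m}(p_i-p_j)^{-2}\Big]^{-1},\qquad \mu_k^2=\Big(\sum_{1\le i<j\le m}\frac{1}{(p_i-p_j)^2-\mu_{k-1}^2}\Big)^{-1}+\mu_{k-1}^2\ (k\ge1),$$ $$M_0^2=\sum_{1\le i<j\le m}(p_j-p_i)^2,\qquad M_k^2=\Big(\sum_{1\le i<j\le m}\frac{1}{(p_i-p_j)^2-M_{k-1}^2}\Big)^{-1}+M_{k-1}^2\ (k\ge1).$$ Then these are well defined with $0<\mu_k<\mu$ and $M_k>M$ for all $k\ge0$, and each $\mu_k^2$ and each $M_k^2$ ($k=0,1,2,\dots$) can be expressed as a rational function of the coefficients of $P_n(x)$. *)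

theory Defs
  imports Complex_Main "HOL-Computational_Algebra.Polynomial"
begin

definition all_roots_real :: "real poly \<Rightarrow> bool" where
  "all_roots_real P \<longleftrightarrow> P \<noteq> 0 \<and>
     (\<forall>z. poly (map_poly complex_of_real P) z = 0 \<longrightarrow> z \<in> \<real>)"

text \<open>Index pairs i < j among 0..m-1 (the paper's 1 \<le> i < j \<le> m, shifted by one).\<close>
definition pairs :: "nat \<Rightarrow> (nat \<times> nat) set" where
  "pairs m = {(i, j). i < j \<and> j < m}"

fun musq :: "nat \<Rightarrow> (nat \<Rightarrow> real) \<Rightarrow> nat \<Rightarrow> real" where
  "musq m p 0 = inverse (\<Sum>(i, j)\<in>pairs m. inverse ((p i - p j)^2))"
| "musq m p (Suc k) =
     inverse (\<Sum>(i, j)\<in>pairs m. inverse ((p i - p j)^2 - musq m p k)) + musq m p k"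

fun Msq :: "nat \<Rightarrow> (nat \<Rightarrow> real) \<Rightarrow> nat \<Rightarrow> real" where
  "Msq m p 0 = (\<Sum>(i, j)\<in>pairs m. (p j - p i)^2)"
| "Msq m p (Suc k) =
     inverse (\<Sum>(i, j)\<in>pairs m. inverse ((p i - p j)^2 - Msq m p k)) + Msq m p k"

datatype rexp = RVar nat | RConst real | RAdd rexp rexp | RMul rexp rexp | RNeg rexp | RInv rexp

text \<open>Evaluation; None if some denominator vanishes (expression undefined at this point).\<close>
fun reval :: "rexp \<Rightarrow> (nat \<Rightarrow> real) \<Rightarrow> real option" where
  "reval (RVar i) v = Some (v i)"
| "reval (RConst c) v = Some c"
| "reval (RAdd a b) v = (case (reval a v, reval b v) of (Some x, Some y) \<Rightarrow> Some (x + y) | _ \<Rightarrow> None)"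
| "reval (RMul a b) v = (case (reval a v, reval b v) of (Some x, Some y) \<Rightarrow> Some (x * y) | _ \<Rightarrow> None)"
| "reval (RNeg a) v = map_option uminus (reval a v)"
| "reval (RInv a) v = (case reval a v of Some x \<Rightarrow> if x = 0 then None else Some (inverse x) | None \<Rightarrow> None)"

end

(*
  The squared differences d_ij = (p_i - p_j)^2, i < j, are the roots of
  E(x) = prod_{i<j} (x - d_ij), and sum_{i<j} 1/(d_ij - c) = - E'(c) / E(c).

  Bounds: the step c |-> c + 1/(sum_{i<j} 1/(d_ij - c)) keeps c strictly on the same side of
  every d_ij, because 1/(d_ij - c) is only one of at least two summands of the same sign.

  Rationality: the coefficients of E are obtained from the power sums of the d_ij by Newton's
  identities; these expand binomially into products of power sums of the p_i, which Newton's
  identities again express through the coefficients of the radical F = prod_i (x - p_i).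
  Finally F is a rational function of the coefficients of P, uniformly in P: F P' = P B with
  deg B < m, and this linear system for the coefficients of F and B has only one solution,
  since in a solution of the homogeneous system f vanishes at all m roots of P although
  deg f < m. Cramer's rule for the normal equations of the system then gives F.
*)
theory Submission
  imports Defs "Jordan_Normal_Form.Determinant" "HOL-Computational_Algebra.Fundamental_Theorem_Algebra"
begin

section \<open>Functions given by a rational expression in the coefficients\<close>

text \<open>The second argument of \<open>D\<close> and \<open>f\<close> carries extra data, such as an enumeration of the roots,
  on which \<open>f\<close> may depend while the expression \<open>R\<close> may not.\<close>

definition rational_in_coeffs :: "(real poly \<Rightarrow> 'a \<Rightarrow> bool) \<Rightarrow> (real poly \<Rightarrow> 'a \<Rightarrow> real) \<Rightarrow> bool" where
  "rational_in_coeffs D f \<longleftrightarrow> (\<exists>R. \<forall>Q x. D Q x \<longrightarrow> reval R (coeff Q) = Some (f Q x))"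

lemma rational_in_coeffsI:
  "(\<And>Q x. D Q x \<Longrightarrow> reval R (coeff Q) = Some (f Q x)) \<Longrightarrow> rational_in_coeffs D f"
  unfolding rational_in_coeffs_def by blast

lemma rational_in_coeffs_const: "rational_in_coeffs D (\<lambda>Q x. c)"
  by (rule rational_in_coeffsI[of _ "RConst c"]) simp

lemma rational_in_coeffs_coeff: "rational_in_coeffs D (\<lambda>Q x. coeff Q i)"
  by (rule rational_in_coeffsI[of _ "RVar i"]) simp

lemma rational_in_coeffs_add:
  assumes "rational_in_coeffs D f" "rational_in_coeffs D g"
  shows "rational_in_coeffs D (\<lambda>Q x. f Q x + g Q x)"
proof -
  obtain R where "\<forall>Q x. D Q x \<longrightarrow> reval R (coeff Q) = Some (f Q x)"
    using assms(1) unfolding rational_in_coeffs_def by blast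
  moreover obtain S where "\<forall>Q x. D Q x \<longrightarrow> reval S (coeff Q) = Some (g Q x)"
    using assms(2) unfolding rational_in_coeffs_def by blast
  ultimately show ?thesis by (intro rational_in_coeffsI[of _ "RAdd R S"]) simp
qed

lemma rational_in_coeffs_mult:
  assumes "rational_in_coeffs D f" "rational_in_coeffs D g"
  shows "rational_in_coeffs D (\<lambda>Q x. f Q x * g Q x)"
proof -
  obtain R where "\<forall>Q x. D Q x \<longrightarrow> reval R (coeff Q) = Some (f Q x)"
    using assms(1) unfolding rational_in_coeffs_def by blast
  moreover obtain S where "\<forall>Q x. D Q x \<longrightarrow> reval S (coeff Q) = Some (g Q x)"
    using assms(2) unfolding rational_in_coeffs_def by blast
  ultimately show ?thesis by (intro rational_in_coeffsI[of _ "RMul R S"]) simp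
qed

lemma rational_in_coeffs_uminus:
  assumes "rational_in_coeffs D f"
  shows "rational_in_coeffs D (\<lambda>Q x. - f Q x)"
proof -
  obtain R where "\<forall>Q x. D Q x \<longrightarrow> reval R (coeff Q) = Some (f Q x)"
    using assms unfolding rational_in_coeffs_def by blast
  then show ?thesis by (intro rational_in_coeffsI[of _ "RNeg R"]) simp
qed

lemma rational_in_coeffs_inverse:
  assumes "rational_in_coeffs D f" and "\<And>Q x. D Q x \<Longrightarrow> f Q x \<noteq> 0"
  shows "rational_in_coeffs D (\<lambda>Q x. inverse (f Q x))"
proof -
  obtain R where "\<forall>Q x. D Q x \<longrightarrow> reval R (coeff Q) = Some (f Q x)"
    using assms(1) unfolding rational_in_coeffs_def by blast
  with assms(2) show ?thesis by (intro rational_in_coeffsI[of _ "RInv R"]) simp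
qed

lemma rational_in_coeffs_diff:
  "rational_in_coeffs D f \<Longrightarrow> rational_in_coeffs D g \<Longrightarrow> rational_in_coeffs D (\<lambda>Q x. f Q x - g Q x)"
  using rational_in_coeffs_add[OF _ rational_in_coeffs_uminus, of D f g] by simp

lemma rational_in_coeffs_divide:
  "rational_in_coeffs D f \<Longrightarrow> rational_in_coeffs D g \<Longrightarrow> (\<And>Q x. D Q x \<Longrightarrow> g Q x \<noteq> 0) \<Longrightarrow>
     rational_in_coeffs D (\<lambda>Q x. f Q x / g Q x)"
  using rational_in_coeffs_mult[OF _ rational_in_coeffs_inverse, of D f g] by (simp add: divide_inverse)

lemma rational_in_coeffs_cong:
  "rational_in_coeffs D g \<Longrightarrow> (\<And>Q x. D Q x \<Longrightarrow> f Q x = g Q x) \<Longrightarrow> rational_in_coeffs D f"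
  unfolding rational_in_coeffs_def by auto

lemma rational_in_coeffs_sum:
  "finite S \<Longrightarrow> (\<And>s. s \<in> S \<Longrightarrow> rational_in_coeffs D (f s)) \<Longrightarrow>
     rational_in_coeffs D (\<lambda>Q x. \<Sum>s\<in>S. f s Q x)"
  by (induction S rule: finite_induct) (auto intro: rational_in_coeffs_const rational_in_coeffs_add)

lemma rational_in_coeffs_prod:
  "finite S \<Longrightarrow> (\<And>s. s \<in> S \<Longrightarrow> rational_in_coeffs D (f s)) \<Longrightarrow>
     rational_in_coeffs D (\<lambda>Q x. \<Prod>s\<in>S. f s Q x)"
  by (induction S rule: finite_induct) (auto intro: rational_in_coeffs_const rational_in_coeffs_mult)

lemma rational_in_coeffs_power:
  "rational_in_coeffs D f \<Longrightarrow> rational_in_coeffs D (\<lambda>Q x. f Q x ^ k)"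
  using rational_in_coeffs_prod[of "{..<k}" D "\<lambda>_. f"] by simp

lemma rational_in_coeffs_det:
  assumes "\<And>Q x. D Q x \<Longrightarrow> A Q x \<in> carrier_mat n n"
    and "\<And>i j. i < n \<Longrightarrow> j < n \<Longrightarrow> rational_in_coeffs D (\<lambda>Q x. A Q x $$ (i, j))"
  shows "rational_in_coeffs D (\<lambda>Q x. det (A Q x))"
proof -
  have "rational_in_coeffs D
      (\<lambda>Q x. \<Sum>p\<in>{p. p permutes {0..<n}}. signof p * (\<Prod>i = 0..<n. A Q x $$ (i, p i)))"
    using assms(2) by (intro rational_in_coeffs_sum rational_in_coeffs_mult rational_in_coeffs_const
        rational_in_coeffs_prod) (auto simp: finite_permutations permutes_in_image)
  then show ?thesis
    by (rule rational_in_coeffs_cong) (simp add: det_def'[OF assms(1)])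
qed

section \<open>Cramer's rule for injective linear systems\<close>

lemma det_gram_nonzero:
  fixes A :: "real mat"
  assumes A: "A \<in> carrier_mat r c"
    and ker: "\<And>v. v \<in> carrier_vec c \<Longrightarrow> A *\<^sub>v v = 0\<^sub>v r \<Longrightarrow> v = 0\<^sub>v c"
  shows "det (transpose_mat A * A) \<noteq> 0"
proof
  assume "det (transpose_mat A * A) = 0"
  then obtain v where v: "v \<in> carrier_vec c" "v \<noteq> 0\<^sub>v c" "(transpose_mat A * A) *\<^sub>v v = 0\<^sub>v c"
    using det_0_iff_vec_prod_zero[of "transpose_mat A * A" c] A by auto
  define w where "w = A *\<^sub>v v"
  have w: "w \<in> carrier_vec r" using A v(1) by (simp add: w_def)
  have "w \<bullet> w = (transpose_mat A *\<^sub>v w) \<bullet> v"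
    using transpose_vec_mult_scalar[OF A v(1) w] by (simp add: w_def)
  also have "\<dots> = ((transpose_mat A * A) *\<^sub>v v) \<bullet> v"
    using A v(1) by (simp add: w_def assoc_mult_mat_vec)
  also have "\<dots> = 0" using v by simp
  finally have "w \<bullet>c w = 0" by simp
  then have "w = 0\<^sub>v r" using conjugate_square_eq_0_vec[OF w] by blast
  with ker v show False unfolding w_def by blast
qed

lemma cramer_normal_equations:
  fixes A :: "real mat"
  assumes A: "A \<in> carrier_mat r c" and z: "z \<in> carrier_vec c" and l: "l < c"
    and ker: "\<And>v. v \<in> carrier_vec c \<Longrightarrow> A *\<^sub>v v = 0\<^sub>v r \<Longrightarrow> v = 0\<^sub>v c"
  shows "z $ l = det (replace_col (transpose_mat A * A) (transpose_mat A *\<^sub>v (A *\<^sub>v z)) l)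
      / det (transpose_mat A * A)"
proof -
  have "transpose_mat A *\<^sub>v (A *\<^sub>v z) = (transpose_mat A * A) *\<^sub>v z"
    using A z by simp
  then have "det (replace_col (transpose_mat A * A) (transpose_mat A *\<^sub>v (A *\<^sub>v z)) l)
      = z $ l * det (transpose_mat A * A)"
    using A z l by (simp only:) (rule cramer_lemma_mat, auto)
  with det_gram_nonzero[OF A ker] show ?thesis by simp
qed

lemma rational_in_coeffs_solution:
  assumes A: "\<And>Q x. D Q x \<Longrightarrow> A Q x \<in> carrier_mat r c"
    and b: "\<And>Q x. D Q x \<Longrightarrow> b Q x \<in> carrier_vec r"
    and sol: "\<And>Q x. D Q x \<Longrightarrow> \<exists>z \<in> carrier_vec c. A Q x *\<^sub>v z = b Q x \<and> z $ l = f Q x"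
    and ker: "\<And>Q x v. D Q x \<Longrightarrow> v \<in> carrier_vec c \<Longrightarrow> A Q x *\<^sub>v v = 0\<^sub>v r \<Longrightarrow> v = 0\<^sub>v c"
    and rA: "\<And>i j. i < r \<Longrightarrow> j < c \<Longrightarrow> rational_in_coeffs D (\<lambda>Q x. A Q x $$ (i, j))"
    and rb: "\<And>i. i < r \<Longrightarrow> rational_in_coeffs D (\<lambda>Q x. b Q x $ i)"
    and l: "l < c"
  shows "rational_in_coeffs D f"
proof -
  define G where "G Q x = transpose_mat (A Q x) * A Q x" for Q x
  define h where "h Q x = transpose_mat (A Q x) *\<^sub>v b Q x" for Q x
  have G: "G Q x \<in> carrier_mat c c" if "D Q x" for Q x
    using A[OF that] by (simp add: G_def)
  have cramer: "f Q x = det (replace_col (G Q x) (h Q x) l) / det (G Q x)" if D: "D Q x" for Q x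
  proof -
    obtain z where z: "z \<in> carrier_vec c" "A Q x *\<^sub>v z = b Q x" "z $ l = f Q x"
      using sol[OF D] by blast
    show ?thesis
      using cramer_normal_equations[OF A[OF D] z(1) l ker[OF D]] unfolding z(2,3) G_def h_def .
  qed
  have rG: "rational_in_coeffs D (\<lambda>Q x. G Q x $$ (i, j))" if "i < c" "j < c" for i j
  proof (rule rational_in_coeffs_cong)
    show "rational_in_coeffs D (\<lambda>Q x. \<Sum>k<r. A Q x $$ (k, i) * A Q x $$ (k, j))"
      using that by (intro rational_in_coeffs_sum rational_in_coeffs_mult rA) simp_all
    show "G Q x $$ (i, j) = (\<Sum>k<r. A Q x $$ (k, i) * A Q x $$ (k, j))" if "D Q x" for Q x
      using A[OF \<open>D Q x\<close>] \<open>i < c\<close> \<open>j < c\<close> by (simp add: G_def scalar_prod_def atLeast0LessThan)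
  qed
  have rh: "rational_in_coeffs D (\<lambda>Q x. h Q x $ i)" if "i < c" for i
  proof (rule rational_in_coeffs_cong)
    show "rational_in_coeffs D (\<lambda>Q x. \<Sum>k<r. A Q x $$ (k, i) * b Q x $ k)"
      using that by (intro rational_in_coeffs_sum rational_in_coeffs_mult rA rb) simp_all
    show "h Q x $ i = (\<Sum>k<r. A Q x $$ (k, i) * b Q x $ k)" if "D Q x" for Q x
      using A[OF \<open>D Q x\<close>] b[OF \<open>D Q x\<close>] \<open>i < c\<close> by (simp add: h_def scalar_prod_def atLeast0LessThan)
  qed
  have "rational_in_coeffs D (\<lambda>Q x. det (replace_col (G Q x) (h Q x) l) / det (G Q x))"
  proof (intro rational_in_coeffs_divide rational_in_coeffs_det)
    fix i j assume ij: "i < c" "j < c"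
    show "rational_in_coeffs D (\<lambda>Q x. replace_col (G Q x) (h Q x) l $$ (i, j))"
    proof (cases "j = l")
      case True
      show ?thesis
        by (rule rational_in_coeffs_cong[OF rh[OF ij(1)]]) (use ij True in \<open>auto simp: replace_col_def dest!: G\<close>)
    next
      case False
      show ?thesis
        by (rule rational_in_coeffs_cong[OF rG[OF ij]]) (use ij False in \<open>auto simp: replace_col_def dest!: G\<close>)
    qed
  next
    fix Q x assume D: "D Q x"
    show "det (G Q x) \<noteq> 0"
      unfolding G_def by (rule det_gram_nonzero[OF A[OF D] ker[OF D]])
    show "G Q x \<in> carrier_mat c c" by (rule G[OF D])
    then show "replace_col (G Q x) (h Q x) l \<in> carrier_mat c c" by (simp add: replace_col_def)
  qed (rule rG)
  then show ?thesis by (rule rational_in_coeffs_cong) (rule cramer)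
qed

section \<open>Newton's identities\<close>

definition root_poly :: "'i set \<Rightarrow> ('i \<Rightarrow> 'a::idom) \<Rightarrow> 'a poly" where
  "root_poly I x = (\<Prod>i\<in>I. [:- x i, 1:])"

definition power_sum :: "'i set \<Rightarrow> ('i \<Rightarrow> 'a::idom) \<Rightarrow> nat \<Rightarrow> 'a" where
  "power_sum I x s = (\<Sum>i\<in>I. x i ^ s)"

lemma power_sum_0 [simp]: "power_sum I x 0 = of_nat (card I)"
  by (simp add: power_sum_def)

lemma degree_root_poly [simp]: "degree (root_poly I x) = card I"
  unfolding root_poly_def by (subst degree_prod_sum_eq) auto

lemma coeff_root_poly_card [simp]: "coeff (root_poly I x) (card I) = 1"
  using lead_coeff_prod[of "\<lambda>i. [:- x i, 1:]" I] by (simp flip: root_poly_def)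

lemma coeff_linear_quotient:
  fixes p h :: "'a::idom poly"
  assumes p: "p = [:- c, 1:] * h"
  shows "coeff h k = (\<Sum>l = Suc k..degree p. coeff p l * c ^ (l - Suc k))"
proof (induction "degree p - k" arbitrary: k)
  case 0
  show ?case
  proof (cases "h = 0")
    case False
    then have "degree p = Suc (degree h)"
      unfolding p by (subst degree_mult_eq) auto
    then show ?thesis using 0 by (simp add: coeff_eq_0)
  qed (simp add: p)
next
  case (Suc d)
  then have k: "Suc k \<le> degree p" by simp
  have IH: "coeff h (Suc k) = (\<Sum>l = Suc (Suc k)..degree p. coeff p l * c ^ (l - Suc (Suc k)))"
    using Suc by simp
  have "(\<Sum>l = Suc k..degree p. coeff p l * c ^ (l - Suc k))
      = coeff p (Suc k) + (\<Sum>l = Suc (Suc k)..degree p. coeff p l * c ^ (l - Suc k))"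
    using k by (simp add: sum.atLeast_Suc_atMost)
  also have "(\<Sum>l = Suc (Suc k)..degree p. coeff p l * c ^ (l - Suc k)) = c * coeff h (Suc k)"
    unfolding IH sum_distrib_left
    by (rule sum.cong) (auto simp: Suc_diff_Suc[symmetric] Suc_diff_le algebra_simps)
  also have "coeff p (Suc k) = coeff h k - c * coeff h (Suc k)"
    unfolding p by (simp add: coeff_pCons algebra_simps)
  finally show ?case by simp
qed

context
  fixes I :: "'i set" and x :: "'i \<Rightarrow> 'a::idom"
  assumes fin: "finite I"
begin

lemma newton_identity:
  assumes k: "k < card I"
  shows "of_nat (Suc k) * coeff (root_poly I x) (Suc k)
       = (\<Sum>l = Suc k..card I. coeff (root_poly I x) l * power_sum I x (l - Suc k))"
proof -
  have "of_nat (Suc k) * coeff (root_poly I x) (Suc k) = coeff (pderiv (root_poly I x)) k"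
    by (simp add: coeff_pderiv)
  also have "\<dots> = (\<Sum>i\<in>I. coeff (\<Prod>j\<in>I - {i}. [:- x j, 1:]) k)"
    by (simp add: root_poly_def pderiv_prod pderiv_pCons coeff_sum)
  also have "\<dots> = (\<Sum>i\<in>I. \<Sum>l = Suc k..card I. coeff (root_poly I x) l * x i ^ (l - Suc k))"
  proof (rule sum.cong[OF refl])
    fix i assume "i \<in> I"
    then have "root_poly I x = [:- x i, 1:] * (\<Prod>j\<in>I - {i}. [:- x j, 1:])"
      unfolding root_poly_def using fin by (simp add: prod.remove)
    from coeff_linear_quotient[OF this]
    show "coeff (\<Prod>j\<in>I - {i}. [:- x j, 1:]) k
        = (\<Sum>l = Suc k..card I. coeff (root_poly I x) l * x i ^ (l - Suc k))"
      by simp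
  qed
  also have "\<dots> = (\<Sum>l = Suc k..card I. coeff (root_poly I x) l * power_sum I x (l - Suc k))"
    unfolding power_sum_def sum_distrib_left by (rule sum.swap)
  finally show ?thesis .
qed

lemma sum_coeff_root_poly_power_sum:
  "(\<Sum>l = 0..card I. coeff (root_poly I x) l * power_sum I x (l + t)) = 0"
proof -
  have "(\<Sum>l = 0..card I. coeff (root_poly I x) l * power_sum I x (l + t))
      = (\<Sum>i\<in>I. x i ^ t * poly (root_poly I x) (x i))"
    unfolding power_sum_def poly_altdef degree_root_poly sum_distrib_left
    by (subst sum.swap) (auto intro!: sum.cong simp: power_add atLeast0AtMost ac_simps)
  also have "\<dots> = 0"
    by (rule sum.neutral) (auto simp: root_poly_def poly_prod fin)
  finally show ?thesis .
qed

end

lemma power_sum_rec_low: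
  fixes x :: "'i \<Rightarrow> 'a::idom"
  assumes "finite I" and s: "0 < s" "s < card I"
  shows "power_sum I x s = of_nat (card I - s) * coeff (root_poly I x) (card I - s)
     - (\<Sum>l = card I - s..<card I. coeff (root_poly I x) l * power_sum I x (l - (card I - s)))"
proof -
  have k: "Suc (card I - s - 1) = card I - s" using s by simp
  have "of_nat (card I - s) * coeff (root_poly I x) (card I - s)
      = (\<Sum>l = card I - s..card I. coeff (root_poly I x) l * power_sum I x (l - (card I - s)))"
    using newton_identity[OF assms(1), of "card I - s - 1" x] s unfolding k by simp
  also have "\<dots> = (\<Sum>l = card I - s..<card I. coeff (root_poly I x) l * power_sum I x (l - (card I - s)))
      + power_sum I x s"
    using s by (simp flip: atLeastLessThanSuc_atLeastAtMost)
  finally have "power_sum I x s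
      + (\<Sum>l = card I - s..<card I. coeff (root_poly I x) l * power_sum I x (l - (card I - s)))
      = of_nat (card I - s) * coeff (root_poly I x) (card I - s)"
    by (metis add.commute)
  then show ?thesis by (simp add: eq_diff_eq)
qed

lemma power_sum_rec_high:
  fixes x :: "'i \<Rightarrow> 'a::idom"
  assumes "finite I" and s: "card I \<le> s"
  shows "power_sum I x s = - (\<Sum>l<card I. coeff (root_poly I x) l * power_sum I x (l + (s - card I)))"
proof -
  have "0 = (\<Sum>l = 0..card I. coeff (root_poly I x) l * power_sum I x (l + (s - card I)))"
    using sum_coeff_root_poly_power_sum[OF assms(1)] by simp
  also have "\<dots> = (\<Sum>l<card I. coeff (root_poly I x) l * power_sum I x (l + (s - card I)))
      + power_sum I x s"
    using s by (simp add: lessThan_atLeast0 flip: atLeastLessThanSuc_atLeastAtMost)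
  finally have "power_sum I x s + (\<Sum>l<card I. coeff (root_poly I x) l * power_sum I x (l + (s - card I))) = 0"
    by (simp add: add.commute)
  then show ?thesis by (simp add: eq_neg_iff_add_eq_0)
qed

lemma coeff_root_poly_rec:
  fixes x :: "'i \<Rightarrow> 'a::{idom, semiring_char_0}"
  assumes "finite I" and l: "l < card I"
  shows "(of_nat l - of_nat (card I)) * coeff (root_poly I x) l
       = (\<Sum>l' = Suc l..card I. coeff (root_poly I x) l' * power_sum I x (l' - l))"
proof (cases l)
  case 0
  have "0 = (\<Sum>l' = 0..card I. coeff (root_poly I x) l' * power_sum I x l')"
    using sum_coeff_root_poly_power_sum[OF assms(1), of x 0] by simp
  also have "\<dots> = coeff (root_poly I x) 0 * of_nat (card I)
      + (\<Sum>l' = Suc 0..card I. coeff (root_poly I x) l' * power_sum I x l')"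
    by (simp add: sum.atLeast_Suc_atMost)
  finally have "(\<Sum>l' = Suc 0..card I. coeff (root_poly I x) l' * power_sum I x l')
      + coeff (root_poly I x) 0 * of_nat (card I) = 0"
    by (simp add: add.commute)
  then show ?thesis using 0 by (simp add: neg_eq_iff_add_eq_0 add.commute mult.commute)
next
  case (Suc k)
  have "of_nat l * coeff (root_poly I x) l
      = (\<Sum>l' = l..card I. coeff (root_poly I x) l' * power_sum I x (l' - l))"
    using newton_identity[OF assms(1), of k x] l Suc by simp
  also have "\<dots> = coeff (root_poly I x) l * of_nat (card I)
      + (\<Sum>l' = Suc l..card I. coeff (root_poly I x) l' * power_sum I x (l' - l))"
    using l by (simp add: sum.atLeast_Suc_atMost)
  finally show ?thesis by (simp add: algebra_simps)
qed

lemma rational_in_coeffs_power_sum: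
  assumes "finite I"
    and coeffs: "\<And>l. rational_in_coeffs D (\<lambda>Q x. coeff (root_poly I (X Q x)) l)"
  shows "rational_in_coeffs D (\<lambda>Q x. power_sum I (X Q x) s)"
proof (induction s rule: less_induct)
  case (less s)
  consider "s = 0" | "0 < s" "s < card I" | "card I \<le> s" by linarith
  then show ?case
  proof cases
    case 1
    then show ?thesis by (simp add: rational_in_coeffs_const)
  next
    case 2
    show ?thesis
      by (rule rational_in_coeffs_cong[OF _ power_sum_rec_low[OF assms(1) 2]])
        (intro rational_in_coeffs_diff rational_in_coeffs_mult rational_in_coeffs_sum
          rational_in_coeffs_const coeffs less, use 2 in auto)
  next
    case 3
    show ?thesis
      by (rule rational_in_coeffs_cong[OF _ power_sum_rec_high[OF assms(1) 3]])
        (intro rational_in_coeffs_uminus rational_in_coeffs_mult rational_in_coeffs_sum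
          coeffs less, use 3 in auto)
  qed
qed

lemma rational_in_coeffs_coeff_root_poly:
  assumes "finite I"
    and power_sums: "\<And>s. rational_in_coeffs D (\<lambda>Q x. power_sum I (X Q x) s)"
  shows "rational_in_coeffs D (\<lambda>Q x. coeff (root_poly I (X Q x)) l)"
proof (induction l rule: measure_induct_rule[where f = "\<lambda>l. card I - l"])
  case (less l)
  consider "card I \<le> l" | "l < card I" by linarith
  then show ?case
  proof cases
    case 1
    then show ?thesis
      by (cases "l = card I") (simp_all add: coeff_eq_0 rational_in_coeffs_const)
  next
    case 2
    have nz: "(of_nat l - of_nat (card I) :: real) \<noteq> 0" using 2 by simp
    have coeff_eq: "coeff (root_poly I (X Q x)) l
        = (\<Sum>l' = Suc l..card I. coeff (root_poly I (X Q x)) l' * power_sum I (X Q x) (l' - l))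
          / (of_nat l - of_nat (card I))" for Q x
      using coeff_root_poly_rec[OF assms(1) 2, of "X Q x"]
      by (simp add: nonzero_eq_divide_eq[OF nz] mult.commute)
    show ?thesis
      by (rule rational_in_coeffs_cong[OF _ coeff_eq])
        (intro rational_in_coeffs_divide rational_in_coeffs_sum rational_in_coeffs_mult
          rational_in_coeffs_const power_sums less, use 2 nz in auto)
  qed
qed

section \<open>The radical of a real-rooted polynomial\<close>

lemma poly_map_poly_of_real:
  "poly (map_poly of_real p) (of_real x :: 'a::{real_algebra_1, comm_ring_1}) = of_real (poly p x)"
  by (induction p) (simp_all add: map_poly_pCons)

lemma map_poly_of_real_mult:
  "map_poly (of_real :: real \<Rightarrow> 'a::{real_algebra_1, comm_ring_1}) (p * q) = map_poly of_real p * map_poly of_real q"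
  by (rule poly_eqI) (simp add: coeff_map_poly coeff_mult)

context
  notes mult_pCons_left [simp del]
begin

lemma all_roots_real_factors:
  assumes "all_roots_real Q"
  shows "\<exists>L. Q = Polynomial.smult (lead_coeff Q) (\<Prod>a\<leftarrow>L. [:- a, 1:])"
  using assms
proof (induction "degree Q" arbitrary: Q)
  case 0
  then have "Q = [:lead_coeff Q:]" by (metis degree_0_id)
  then have "Q = Polynomial.smult (lead_coeff Q) (\<Prod>a\<leftarrow>[]. [:- a, 1:])"
    by (simp add: smult_one)
  then show ?case by blast
next
  case (Suc d)
  have Q: "Q \<noteq> 0" using Suc.prems unfolding all_roots_real_def by simp
  have "\<not> constant (poly (map_poly complex_of_real Q))"
    using Suc.hyps(2) by (simp add: constant_degree degree_map_poly)
  then obtain z where z: "poly (map_poly complex_of_real Q) z = 0"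
    using fundamental_theorem_of_algebra by blast
  then obtain a where a: "z = of_real a"
    using Suc.prems unfolding all_roots_real_def by (blast elim: Reals_cases)
  with z have "poly Q a = 0" by (simp add: poly_map_poly_of_real)
  then obtain Q1 where Q1: "Q = [:- a, 1:] * Q1"
    by (auto simp: poly_eq_0_iff_dvd elim: dvdE)
  with Q have "Q1 \<noteq> 0" by auto
  with Q1 have deg: "degree Q = Suc (degree Q1)" by (simp add: degree_mult_eq)
  have "all_roots_real Q1"
    using Suc.prems \<open>Q1 \<noteq> 0\<close> unfolding all_roots_real_def Q1 map_poly_of_real_mult by auto
  then obtain L where L: "Q1 = Polynomial.smult (lead_coeff Q1) (\<Prod>a\<leftarrow>L. [:- a, 1:])"
    using Suc.hyps deg by auto
  have "Q = Polynomial.smult (lead_coeff Q) (\<Prod>a\<leftarrow>a # L. [:- a, 1:])"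
    using Q1 by (subst (1) Q1, subst L) (simp add: lead_coeff_mult mult_smult_right)
  then show ?case by blast
qed

lemma prod_list_linear_dvd_radical_mult_pderiv:
  fixes L :: "'a::idom list"
  shows "(\<Prod>a\<leftarrow>L. [:- a, 1:]) dvd (\<Prod>a\<in>set L. [:- a, 1:]) * pderiv (\<Prod>a\<leftarrow>L. [:- a, 1:])"
proof (induction L)
  case (Cons a L)
  define P where "P = (\<Prod>a\<leftarrow>L. [:- a, 1:])"
  define F where "F = (\<Prod>a\<in>set L. [:- a, 1:])"
  have IH: "P dvd F * pderiv P" using Cons.IH unfolding P_def F_def .
  have prod_Cons: "(\<Prod>b\<leftarrow>a # L. [:- b, 1:]) = [:- a, 1:] * P"
    by (simp add: P_def)
  have deriv: "pderiv ([:- a, 1:] * P) = P + [:- a, 1:] * pderiv P"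
    by (simp add: pderiv_mult pderiv_pCons)
  show ?case
  proof (cases "a \<in> set L")
    case True
    then have "[:- a, 1:] dvd F"
      using dvd_prodI[of "set L" a "\<lambda>a. [:- a, 1:]"] by (simp add: F_def)
    then have "[:- a, 1:] * P dvd F * P + [:- a, 1:] * (F * pderiv P)"
      using mult_dvd_mono[OF _ dvd_refl] mult_dvd_mono[OF dvd_refl IH] by (intro dvd_add)
    also have "\<dots> = F * pderiv ([:- a, 1:] * P)"
      unfolding deriv by (simp only: ring_distribs mult_ac)
    finally have "[:- a, 1:] * P dvd F * pderiv ([:- a, 1:] * P)" .
    moreover have "(\<Prod>b\<in>set (a # L). [:- b, 1:]) = F"
      using True by (simp add: F_def insert_absorb)
    ultimately show ?thesis by (simp only: prod_Cons)
  next
    case False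
    have "P dvd F * P + [:- a, 1:] * (F * pderiv P)"
      using IH by (intro dvd_add) auto
    then have "[:- a, 1:] * P dvd [:- a, 1:] * (F * P + [:- a, 1:] * (F * pderiv P))"
      by (rule mult_dvd_mono[OF dvd_refl])
    also have "\<dots> = ([:- a, 1:] * F) * pderiv ([:- a, 1:] * P)"
      unfolding deriv by (simp only: ring_distribs mult_ac)
    finally have "[:- a, 1:] * P dvd ([:- a, 1:] * F) * pderiv ([:- a, 1:] * P)" .
    moreover have "(\<Prod>b\<in>set (a # L). [:- b, 1:]) = [:- a, 1:] * F"
      using False by (simp add: F_def)
    ultimately show ?thesis by (simp only: prod_Cons)
  qed
qed simp

end

lemma poly_eq_0_if_mult_pderiv_eq:
  fixes Q f b :: "'a::{idom, semiring_char_0} poly"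
  assumes "Q \<noteq> 0" "poly Q a = 0" "pderiv Q \<noteq> 0" "f * pderiv Q = b * Q"
  shows "poly f a = 0"
proof (cases "f = 0")
  case False
  with assms(3) have fQ: "f * pderiv Q \<noteq> 0" by simp
  with assms(4) have bQ: "b * Q \<noteq> 0" by simp
  have "order a f + order a (pderiv Q) = order a b + order a Q"
    using order_mult[OF fQ, of a] order_mult[OF bQ, of a] assms(4) by simp
  moreover have "order a Q = Suc (order a (pderiv Q))"
    using assms(1,2) by (rule order_pderiv)
  ultimately show ?thesis by (simp add: order_root)
qed simp

definition sorted_roots :: "nat \<Rightarrow> nat \<Rightarrow> real poly \<Rightarrow> (nat \<Rightarrow> real) \<Rightarrow> bool" where
  "sorted_roots n m Q q \<longleftrightarrow> all_roots_real Q \<and> degree Q = n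
     \<and> (\<forall>i j. i < j \<and> j < m \<longrightarrow> q i < q j) \<and> {x. poly Q x = 0} = q ` {..<m}"

lemma poly_prod_list_linear_eq_0_iff:
  "poly (\<Prod>a\<leftarrow>L. [:- a, 1:]) x = 0 \<longleftrightarrow> x \<in> set L"
  for x :: "'a::idom"
  by (induction L) auto

lemma sum_lessThan_add:
  fixes f :: "nat \<Rightarrow> 'a::comm_monoid_add"
  shows "(\<Sum>j<a + k. f j) = (\<Sum>j<a. f j) + (\<Sum>j<k. f (a + j))"
  by (induction k) (simp_all add: ac_simps)

lemma coeff_sum_monom_lessThan: "j < k \<Longrightarrow> coeff (\<Sum>i<k. monom (c i) i) j = c j"
  by (simp add: coeff_sum coeff_monom)

lemma degree_sum_monom_lessThan:
  assumes "0 < k"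
  shows "degree (\<Sum>i<k. monom (c i) i) < k"
proof -
  have "degree (\<Sum>i<k. monom (c i) i) \<le> k - 1"
    by (rule degree_sum_le) (auto intro: order_trans[OF degree_monom_le])
  with assms show ?thesis by linarith
qed

lemma sum_mult_coeff_monom_mult:
  fixes p :: "'a::comm_semiring_1 poly"
  shows "(\<Sum>j<k. c j * coeff (monom 1 j * p) s) = coeff ((\<Sum>j<k. monom (c j) j) * p) s"
  by (auto simp: coeff_sum sum_distrib_right coeff_monom_mult intro!: sum.cong)

text \<open>The matrix of \<open>(f, b) \<mapsto> f * pderiv Q - b * Q\<close> on pairs of polynomials of degree
  \<open>< m\<close>, with respect to the monomial bases.\<close>

definition radical_system :: "real poly \<Rightarrow> nat \<Rightarrow> real mat" where
  "radical_system Q m = mat (degree Q + m) (m + m) (\<lambda>(i, j).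
     if j < m then coeff (monom 1 j * pderiv Q) i else - coeff (monom 1 (j - m) * Q) i)"

lemma radical_system_mult_vec:
  assumes "v \<in> carrier_vec (m + m)" "i < degree Q + m"
  shows "(radical_system Q m *\<^sub>v v) $ i
       = coeff ((\<Sum>j<m. monom (v $ j) j) * pderiv Q - (\<Sum>j<m. monom (v $ (m + j)) j) * Q) i"
proof -
  have "(radical_system Q m *\<^sub>v v) $ i
      = (\<Sum>j<m. v $ j * coeff (monom 1 j * pderiv Q) i)
        - (\<Sum>j<m. v $ (m + j) * coeff (monom 1 j * Q) i)"
    using assms
    by (simp add: radical_system_def scalar_prod_def atLeast0LessThan sum_lessThan_add
        sum_negf[symmetric] ac_simps)
  then show ?thesis by (simp add: sum_mult_coeff_monom_mult)
qed

context
  fixes n m Q q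
  assumes roots: "sorted_roots n m Q q" and m: "0 < m"
begin

lemma sorted_roots_nonzero: "Q \<noteq> 0"
  using roots by (simp add: sorted_roots_def all_roots_real_def)

lemma sorted_roots_inj: "inj_on q {..<m}"
  using roots unfolding sorted_roots_def
  by (intro linorder_inj_onI') force

lemma sorted_roots_poly_eq_0: "i < m \<Longrightarrow> poly Q (q i) = 0"
  using roots unfolding sorted_roots_def by blast

lemma sorted_roots_pderiv_nonzero: "pderiv Q \<noteq> 0"
proof -
  have "poly Q (q 0) = 0" using m by (rule sorted_roots_poly_eq_0)
  then have "order (q 0) Q \<noteq> 0" using sorted_roots_nonzero by (simp add: order_root)
  moreover have "order (q 0) Q \<le> degree Q" by (rule order_degree[OF sorted_roots_nonzero])
  ultimately have "degree Q \<noteq> 0" by linarith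
  then show ?thesis using pderiv_eq_0_iff[of Q] by simp
qed

lemma sorted_roots_radical_mult_pderiv:
  "\<exists>B. root_poly {..<m} q * pderiv Q = Q * B \<and> degree B < m"
proof -
  have "all_roots_real Q" using roots by (simp add: sorted_roots_def)
  then obtain L where L: "Q = Polynomial.smult (lead_coeff Q) (\<Prod>a\<leftarrow>L. [:- a, 1:])"
    using all_roots_real_factors by blast
  have "poly Q x = lead_coeff Q * poly (\<Prod>a\<leftarrow>L. [:- a, 1:]) x" for x
    by (subst (1) L) simp
  then have "set L = {x. poly Q x = 0}"
    using sorted_roots_nonzero by (simp add: poly_prod_list_linear_eq_0_iff)
  then have "root_poly {..<m} q = (\<Prod>a\<in>set L. [:- a, 1:])"
    using roots sorted_roots_inj by (simp add: sorted_roots_def root_poly_def prod.reindex)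
  moreover obtain K where
    "(\<Prod>a\<in>set L. [:- a, 1:]) * pderiv (\<Prod>a\<leftarrow>L. [:- a, 1:]) = (\<Prod>a\<leftarrow>L. [:- a, 1:]) * K"
    using prod_list_linear_dvd_radical_mult_pderiv[of L] by (elim dvdE)
  ultimately have B: "root_poly {..<m} q * pderiv Q = Q * K"
    by (subst (1 2) L) (simp add: pderiv_smult)
  have "root_poly {..<m} q \<noteq> 0" by (simp add: root_poly_def)
  with B sorted_roots_pderiv_nonzero have "K \<noteq> 0" by auto
  with B sorted_roots_nonzero \<open>root_poly {..<m} q \<noteq> 0\<close> sorted_roots_pderiv_nonzero
  have "m + degree (pderiv Q) = degree Q + degree K"
    by (metis degree_mult_eq degree_root_poly card_lessThan)
  moreover have "degree (pderiv Q) < degree Q"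
    using sorted_roots_pderiv_nonzero by (simp add: degree_pderiv pderiv_eq_0_iff)
  ultimately have "degree K < m" by linarith
  with B show ?thesis by blast
qed

lemma sorted_roots_mult_pderiv_eq_imp_0:
  assumes eq: "f * pderiv Q = b * Q" and deg: "degree f < m"
  shows "f = 0" and "b = 0"
proof -
  show "f = 0"
  proof (rule ccontr)
    assume "f \<noteq> 0"
    have "poly f (q i) = 0" if "i < m" for i
      by (rule poly_eq_0_if_mult_pderiv_eq[OF sorted_roots_nonzero sorted_roots_poly_eq_0[OF that]
          sorted_roots_pderiv_nonzero eq])
    then have "q ` {..<m} \<subseteq> {x. poly f x = 0}" by auto
    then have "card (q ` {..<m}) \<le> card {x. poly f x = 0}"
      by (rule card_mono[OF poly_roots_finite[OF \<open>f \<noteq> 0\<close>]])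
    then have "m \<le> card {x. poly f x = 0}"
      by (simp add: card_image[OF sorted_roots_inj])
    also have "\<dots> \<le> degree f" by (rule card_poly_roots_bound[OF \<open>f \<noteq> 0\<close>])
    finally show False using deg by simp
  qed
  with eq sorted_roots_nonzero show "b = 0" by simp
qed

lemma radical_system_kernel:
  assumes v: "v \<in> carrier_vec (m + m)" and zero: "radical_system Q m *\<^sub>v v = 0\<^sub>v (degree Q + m)"
  shows "v = 0\<^sub>v (m + m)"
proof -
  define f where "f = (\<Sum>j<m. monom (v $ j) j)"
  define b where "b = (\<Sum>j<m. monom (v $ (m + j)) j)"
  have deg_f: "degree f < m" and deg_b: "degree b < m"
    unfolding f_def b_def by (rule degree_sum_monom_lessThan[OF m])+
  have deg: "degree (f * pderiv Q - b * Q) < degree Q + m"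
  proof (rule le_less_trans[OF degree_diff_le_max])
    have "0 < degree Q"
      using sorted_roots_pderiv_nonzero by (simp add: pderiv_eq_0_iff)
    then show "max (degree (f * pderiv Q)) (degree (b * Q)) < degree Q + m"
      using deg_f deg_b degree_mult_le[of f "pderiv Q"] degree_mult_le[of b Q]
      by (simp add: degree_pderiv)
  qed
  have coeffs: "coeff (f * pderiv Q - b * Q) i = 0" if "i < degree Q + m" for i
    using radical_system_mult_vec[OF v that] zero that by (simp add: f_def b_def)
  have "f * pderiv Q - b * Q = 0"
  proof (rule poly_eqI)
    fix i
    show "coeff (f * pderiv Q - b * Q) i = coeff 0 i"
    proof (cases "i < degree Q + m")
      case False
      with deg show ?thesis by (simp add: coeff_eq_0 del: coeff_diff)
    qed (simp add: coeffs del: coeff_diff)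
  qed
  then have "f = 0" "b = 0" using sorted_roots_mult_pderiv_eq_imp_0 deg_f by simp_all
  show ?thesis
  proof (rule eq_vecI)
    fix j assume "j < dim_vec (0\<^sub>v (m + m) :: real vec)"
    then have j: "j < m + m" by simp
    show "v $ j = 0\<^sub>v (m + m) $ j"
    proof (cases "j < m")
      case True
      then have "v $ j = coeff f j" unfolding f_def by (rule coeff_sum_monom_lessThan[symmetric])
      with \<open>f = 0\<close> j show ?thesis by simp
    next
      case False
      with j have "v $ j = coeff b (j - m)"
        unfolding b_def by (subst coeff_sum_monom_lessThan) simp_all
      with \<open>b = 0\<close> j show ?thesis by simp
    qed
  qed (use v in simp)
qed

lemma radical_system_solution:
  "\<exists>z \<in> carrier_vec (m + m).
     radical_system Q m *\<^sub>v z = vec (degree Q + m) (\<lambda>i. - coeff (monom 1 m * pderiv Q) i)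
     \<and> z $ l = coeff (root_poly {..<m} q) l"
  if "l < m"
proof -
  obtain B where B: "root_poly {..<m} q * pderiv Q = Q * B" "degree B < m"
    using sorted_roots_radical_mult_pderiv by blast
  define F where "F = root_poly {..<m} q"
  \<comment> \<open>\<open>F\<close> is monic of degree \<open>m\<close>: its leading term moves to the right-hand side.\<close>
  define z where "z = vec (m + m) (\<lambda>j. if j < m then coeff F j else coeff B (j - m))"
  have F_low: "(\<Sum>j<m. monom (z $ j) j) = F - monom 1 m"
  proof -
    have "coeff F m = 1" using coeff_root_poly_card[of "{..<m}" q] by (simp add: F_def)
    then have "F = (\<Sum>j<m. monom (coeff F j) j) + monom 1 m"
      using poly_as_sum_of_monoms'[of F m] by (simp add: F_def lessThan_Suc_atMost[symmetric])
    then show ?thesis by (simp add: z_def)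
  qed
  have B_eq: "(\<Sum>j<m. monom (z $ (m + j)) j) = B"
    using poly_as_sum_of_monoms'[of B "m - 1"] B(2)
    by (cases m) (simp_all add: z_def lessThan_Suc_atMost)
  have z: "z \<in> carrier_vec (m + m)" by (simp add: z_def)
  have "radical_system Q m *\<^sub>v z = vec (degree Q + m) (\<lambda>i. - coeff (monom 1 m * pderiv Q) i)"
  proof (rule eq_vecI)
    fix i assume "i < dim_vec (vec (degree Q + m) (\<lambda>i. - coeff (monom 1 m * pderiv Q) i))"
    then have i: "i < degree Q + m" by simp
    have "(F - monom 1 m) * pderiv Q - B * Q = - (monom 1 m * pderiv Q)"
      using B(1) by (simp add: F_def algebra_simps)
    then show "(radical_system Q m *\<^sub>v z) $ i
        = vec (degree Q + m) (\<lambda>i. - coeff (monom 1 m * pderiv Q) i) $ i"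
      using radical_system_mult_vec[OF z i] i unfolding F_low B_eq by simp
  qed (simp add: radical_system_def)
  moreover have "z $ l = coeff (root_poly {..<m} q) l" using that by (simp add: z_def F_def)
  ultimately show ?thesis using z by blast
qed

end

lemma rational_in_coeffs_coeff_monom_mult:
  assumes "\<And>k. rational_in_coeffs D (\<lambda>Q x. coeff (P Q) k)"
  shows "rational_in_coeffs D (\<lambda>Q x. coeff (monom 1 j * P Q) i)"
  using assms rational_in_coeffs_const
  by (cases "i < j") (simp_all add: coeff_monom_mult)

lemma rational_in_coeffs_coeff_pderiv: "rational_in_coeffs D (\<lambda>Q x. coeff (pderiv Q) k)"
  by (simp add: coeff_pderiv rational_in_coeffs_mult rational_in_coeffs_const rational_in_coeffs_coeff)

lemma rational_in_coeffs_radical_system: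
  assumes "i < n + m" "j < m + m"
  shows "rational_in_coeffs (sorted_roots n m) (\<lambda>Q q. radical_system Q m $$ (i, j))"
proof (rule rational_in_coeffs_cong)
  show "radical_system Q m $$ (i, j) = (if j < m then coeff (monom 1 j * pderiv Q) i
      else - coeff (monom 1 (j - m) * Q) i)" if "sorted_roots n m Q q" for Q q
    using that assms by (simp add: radical_system_def sorted_roots_def)
  show "rational_in_coeffs (sorted_roots n m) (\<lambda>Q q. if j < m then coeff (monom 1 j * pderiv Q) i
      else - coeff (monom 1 (j - m) * Q) i)"
    by (cases "j < m") (simp_all add: rational_in_coeffs_uminus rational_in_coeffs_coeff_monom_mult
        rational_in_coeffs_coeff_pderiv rational_in_coeffs_coeff)
qed

lemma rational_in_coeffs_coeff_radical:
  assumes m: "0 < m"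
  shows "rational_in_coeffs (sorted_roots n m) (\<lambda>Q q. coeff (root_poly {..<m} q) l)"
proof (cases "l < m")
  case True
  show ?thesis
  proof (rule rational_in_coeffs_solution[where A = "\<lambda>Q q. radical_system Q m"
        and b = "\<lambda>Q q. vec (n + m) (\<lambda>i. - coeff (monom 1 m * pderiv Q) i)"])
    fix Q q assume roots: "sorted_roots n m Q q"
    then have n: "degree Q = n" by (simp add: sorted_roots_def)
    show "radical_system Q m \<in> carrier_mat (n + m) (m + m)"
      by (simp add: radical_system_def n)
    show "vec (n + m) (\<lambda>i. - coeff (monom 1 m * pderiv Q) i) \<in> carrier_vec (n + m)"
      by simp
    show "\<exists>z\<in>carrier_vec (m + m). radical_system Q m *\<^sub>v z
        = vec (n + m) (\<lambda>i. - coeff (monom 1 m * pderiv Q) i) \<and> z $ l = coeff (root_poly {..<m} q) l"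
      using radical_system_solution[OF roots m True] by (simp only: n)
    show "v = 0\<^sub>v (m + m)" if "v \<in> carrier_vec (m + m)" "radical_system Q m *\<^sub>v v = 0\<^sub>v (n + m)" for v
      using radical_system_kernel[OF roots m that(1)] that(2) by (simp only: n)
  next
    fix i j assume "i < n + m" "j < m + m"
    then show "rational_in_coeffs (sorted_roots n m) (\<lambda>Q q. radical_system Q m $$ (i, j))"
      by (rule rational_in_coeffs_radical_system)
  next
    fix i assume "i < n + m"
    then show "rational_in_coeffs (sorted_roots n m) (\<lambda>Q q. vec (n + m) (\<lambda>i. - coeff (monom 1 m * pderiv Q) i) $ i)"
      by (simp add: rational_in_coeffs_uminus rational_in_coeffs_coeff_monom_mult
          rational_in_coeffs_coeff_pderiv)
  qed (use True in simp)
next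
  case False
  then have "coeff (root_poly {..<m} q) l = (if l = m then 1 else 0)" for q :: "nat \<Rightarrow> real"
    using coeff_root_poly_card[of "{..<m}" q] by (auto simp: coeff_eq_0)
  then show ?thesis by (simp add: rational_in_coeffs_const)
qed

section \<open>Power sums of the squared differences\<close>

lemma finite_pairs [simp]: "finite (pairs m)"
  by (rule finite_subset[of _ "{..<m} \<times> {..<m}"]) (auto simp: pairs_def)

lemma sum_square_eq_twice_sum_pairs:
  fixes g :: "nat \<Rightarrow> nat \<Rightarrow> 'a::comm_ring_1"
  assumes sym: "\<And>i j. g i j = g j i" and diag: "\<And>i. g i i = 0"
  shows "(\<Sum>i<m. \<Sum>j<m. g i j) = 2 * (\<Sum>(i, j)\<in>pairs m. g i j)"
proof -
  have split: "{..<m} \<times> {..<m} = pairs m \<union> (prod.swap ` pairs m \<union> (\<lambda>i. (i, i)) ` {..<m})"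
    by (auto simp: pairs_def image_iff)
  have disjoint: "pairs m \<inter> (prod.swap ` pairs m \<union> (\<lambda>i. (i, i)) ` {..<m}) = {}"
    "prod.swap ` pairs m \<inter> (\<lambda>i. (i, i)) ` {..<m} = {}"
    by (auto simp: pairs_def)
  have "(\<Sum>i<m. \<Sum>j<m. g i j) = (\<Sum>(i, j)\<in>{..<m} \<times> {..<m}. g i j)"
    by (simp add: sum.cartesian_product)
  also have "\<dots> = (\<Sum>(i, j)\<in>pairs m. g i j) + ((\<Sum>(i, j)\<in>prod.swap ` pairs m. g i j)
      + (\<Sum>(i, j)\<in>(\<lambda>i. (i, i)) ` {..<m}. g i j))"
    unfolding split using disjoint by (simp add: sum.union_disjoint)
  also have "(\<Sum>(i, j)\<in>prod.swap ` pairs m. g i j) = (\<Sum>(i, j)\<in>pairs m. g i j)"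
    by (subst sum.reindex) (auto simp: sym intro!: sum.cong)
  also have "(\<Sum>(i, j)\<in>(\<lambda>i. (i, i)) ` {..<m}. g i j) = 0"
    by (subst sum.reindex) (auto simp: inj_on_def diag)
  finally show ?thesis by simp
qed

lemma power_sum_sq_diff:
  fixes q :: "nat \<Rightarrow> real"
  assumes "0 < s"
  shows "power_sum (pairs m) (\<lambda>(i, j). (q i - q j)^2) s
       = (\<Sum>k\<le>2 * s. of_nat (2 * s choose k) * (-1) ^ (2 * s - k)
            * power_sum {..<m} q k * power_sum {..<m} q (2 * s - k)) / 2"
proof -
  have "2 * power_sum (pairs m) (\<lambda>(i, j). (q i - q j)^2) s = 2 * (\<Sum>(i, j)\<in>pairs m. (q i - q j) ^ (2 * s))"
    by (simp add: power_sum_def case_prod_unfold power_mult)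
  also have "\<dots> = (\<Sum>i<m. \<Sum>j<m. (q i - q j) ^ (2 * s))"
    using assms by (intro sum_square_eq_twice_sum_pairs[symmetric]) (auto simp: power_mult power2_commute)
  also have "\<dots> = (\<Sum>i<m. \<Sum>j<m. \<Sum>k\<le>2 * s. of_nat (2 * s choose k) * (-1) ^ (2 * s - k)
      * (q i ^ k * q j ^ (2 * s - k)))"
    unfolding diff_conv_add_uminus binomial_ring by (simp add: power_minus[of "q _"] ac_simps)
  also have "\<dots> = (\<Sum>k\<le>2 * s. \<Sum>i<m. \<Sum>j<m. of_nat (2 * s choose k) * (-1) ^ (2 * s - k)
      * (q i ^ k * q j ^ (2 * s - k)))"
    by (rule trans[OF sum.cong[OF refl sum.swap] sum.swap])
  also have "\<dots> = (\<Sum>k\<le>2 * s. of_nat (2 * s choose k) * (-1) ^ (2 * s - k)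
      * power_sum {..<m} q k * power_sum {..<m} q (2 * s - k))"
    unfolding power_sum_def
    by (simp only: mult.assoc, simp only: sum_product, simp only: sum_distrib_left)
  finally show ?thesis by simp
qed

lemma poly_pderiv_root_poly:
  fixes x :: "'i \<Rightarrow> 'a::field"
  assumes "finite I" and "\<And>i. i \<in> I \<Longrightarrow> x i \<noteq> c"
  shows "poly (pderiv (root_poly I x)) c = poly (root_poly I x) c * (\<Sum>i\<in>I. inverse (c - x i))"
proof -
  have "poly (pderiv (root_poly I x)) c = (\<Sum>i\<in>I. \<Prod>j\<in>I - {i}. c - x j)"
    by (simp add: root_poly_def pderiv_prod pderiv_pCons poly_sum poly_prod)
  also have "\<dots> = (\<Sum>i\<in>I. (\<Prod>j\<in>I. c - x j) * inverse (c - x i))"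
  proof (rule sum.cong[OF refl])
    fix i assume i: "i \<in> I"
    then have "(\<Prod>j\<in>I. c - x j) = (c - x i) * (\<Prod>j\<in>I - {i}. c - x j)"
      using assms(1) by (simp add: prod.remove)
    with assms(2)[OF i] show "(\<Prod>j\<in>I - {i}. c - x j) = (\<Prod>j\<in>I. c - x j) * inverse (c - x i)"
      by simp
  qed
  also have "\<dots> = poly (root_poly I x) c * (\<Sum>i\<in>I. inverse (c - x i))"
    by (simp add: root_poly_def poly_prod sum_distrib_left)
  finally show ?thesis .
qed

lemma rational_in_coeffs_poly:
  assumes "\<And>k. rational_in_coeffs D (\<lambda>Q x. coeff (P Q x) k)"
    and "\<And>Q x. D Q x \<Longrightarrow> degree (P Q x) \<le> N"
    and "rational_in_coeffs D c"
  shows "rational_in_coeffs D (\<lambda>Q x. poly (P Q x) (c Q x))"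
proof (rule rational_in_coeffs_cong)
  show "rational_in_coeffs D (\<lambda>Q x. \<Sum>k\<le>N. coeff (P Q x) k * c Q x ^ k)"
    using assms(1,3) by (intro rational_in_coeffs_sum rational_in_coeffs_mult rational_in_coeffs_power) auto
  show "poly (P Q x) (c Q x) = (\<Sum>k\<le>N. coeff (P Q x) k * c Q x ^ k)" if "D Q x" for Q x
    unfolding poly_altdef
    by (rule sum.mono_neutral_left) (use assms(2)[OF that] in \<open>auto simp: coeff_eq_0\<close>)
qed

context
  fixes n m :: nat
  assumes m: "0 < m"
begin

lemma rational_in_coeffs_power_sum_roots:
  "rational_in_coeffs (sorted_roots n m) (\<lambda>Q q. power_sum {..<m} q s)"
  using rational_in_coeffs_power_sum[of "{..<m}" _ "\<lambda>Q q. q"] rational_in_coeffs_coeff_radical[OF m]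
  by simp

lemma rational_in_coeffs_power_sum_sq_diff:
  "rational_in_coeffs (sorted_roots n m) (\<lambda>Q q. power_sum (pairs m) (\<lambda>(i, j). (q i - q j)^2) s)"
proof (cases "s = 0")
  case True
  then show ?thesis by (simp add: rational_in_coeffs_const)
next
  case False
  show ?thesis
    by (rule rational_in_coeffs_cong[OF _ power_sum_sq_diff[OF False[unfolded neq0_conv]]])
      (intro rational_in_coeffs_divide rational_in_coeffs_sum rational_in_coeffs_mult
        rational_in_coeffs_const rational_in_coeffs_power_sum_roots, auto)
qed

lemma rational_in_coeffs_sum_inverse_sq_diff:
  assumes c: "rational_in_coeffs (sorted_roots n m) c"
    and c_ne: "\<And>Q q i j. sorted_roots n m Q q \<Longrightarrow> (i, j) \<in> pairs m \<Longrightarrow> (q i - q j)^2 \<noteq> c Q q"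
  shows "rational_in_coeffs (sorted_roots n m) (\<lambda>Q q. \<Sum>(i, j)\<in>pairs m. inverse ((q i - q j)^2 - c Q q))"
proof -
  define E where "E q = root_poly (pairs m) (\<lambda>(i, j). (q i - q j)^2 :: real)" for q :: "nat \<Rightarrow> real"
  have coeff_E: "rational_in_coeffs (sorted_roots n m) (\<lambda>Q q. coeff (E q) k)" for k
    unfolding E_def
    by (rule rational_in_coeffs_coeff_root_poly[OF finite_pairs rational_in_coeffs_power_sum_sq_diff])
  have E_c: "rational_in_coeffs (sorted_roots n m) (\<lambda>Q q. poly (E q) (c Q q))"
    by (rule rational_in_coeffs_poly[OF coeff_E _ c, of "card (pairs m)"]) (simp add: E_def)
  have "rational_in_coeffs (sorted_roots n m) (\<lambda>Q q. coeff (pderiv (E q)) k)" for k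
    by (rule rational_in_coeffs_cong[OF rational_in_coeffs_mult[OF rational_in_coeffs_const coeff_E]])
      (simp add: coeff_pderiv)
  then have E'_c: "rational_in_coeffs (sorted_roots n m) (\<lambda>Q q. poly (pderiv (E q)) (c Q q))"
    by (rule rational_in_coeffs_poly[OF _ _ c, of _ "card (pairs m)"]) (simp add: degree_pderiv E_def)
  have E_ne: "poly (E q) (c Q q) \<noteq> 0"
    and sum_eq: "(\<Sum>(i, j)\<in>pairs m. inverse ((q i - q j)^2 - c Q q))
      = - poly (pderiv (E q)) (c Q q) / poly (E q) (c Q q)" if "sorted_roots n m Q q" for Q q
  proof -
    have ne: "(\<lambda>(i, j). (q i - q j)^2) p \<noteq> c Q q" if "p \<in> pairs m" for p
    proof -
      obtain i j where p: "p = (i, j)" by (cases p)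
      show ?thesis using c_ne[OF \<open>sorted_roots n m Q q\<close>] that unfolding p by simp
    qed
    have "poly (E q) (c Q q) = (\<Prod>p\<in>pairs m. c Q q - (\<lambda>(i, j). (q i - q j)^2) p)"
      by (simp add: E_def root_poly_def poly_prod)
    also have "\<dots> \<noteq> 0"
    proof
      assume "(\<Prod>p\<in>pairs m. c Q q - (\<lambda>(i, j). (q i - q j)^2) p) = 0"
      then obtain p where "p \<in> pairs m" "c Q q - (\<lambda>(i, j). (q i - q j)^2) p = 0"
        unfolding prod_zero_iff[OF finite_pairs] ..
      then show False using ne[OF \<open>p \<in> pairs m\<close>] by simp
    qed
    finally show E_ne: "poly (E q) (c Q q) \<noteq> 0" .
    have "(\<Sum>(i, j)\<in>pairs m. inverse ((q i - q j)^2 - c Q q))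
        = - (\<Sum>p\<in>pairs m. inverse (c Q q - (\<lambda>(i, j). (q i - q j)^2) p))"
      by (simp add: sum_negf[symmetric] case_prod_unfold inverse_minus_eq[symmetric])
    also have "\<dots> = - poly (pderiv (E q)) (c Q q) / poly (E q) (c Q q)"
      using poly_pderiv_root_poly[OF finite_pairs ne] E_ne by (simp add: E_def)
    finally show "(\<Sum>(i, j)\<in>pairs m. inverse ((q i - q j)^2 - c Q q))
      = - poly (pderiv (E q)) (c Q q) / poly (E q) (c Q q)" .
  qed
  show ?thesis
    by (rule rational_in_coeffs_cong[OF rational_in_coeffs_divide[OF
          rational_in_coeffs_uminus[OF E'_c] E_c E_ne] sum_eq])
qed

end

section \<open>Bounds for the iterates\<close>

lemma member_less_sum:
  fixes f :: "'a \<Rightarrow> real"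
  assumes "finite T" "p \<in> T" "p' \<in> T" "p' \<noteq> p" and pos: "\<And>x. x \<in> T \<Longrightarrow> 0 < f x"
  shows "f p < sum f T"
proof -
  have "f p < f p + f p'" using pos assms(3) by simp
  also have "\<dots> = sum f {p, p'}" using assms(4) by simp
  also have "\<dots> \<le> sum f T"
    using assms(1-3) pos by (intro sum_mono2) (auto intro: less_imp_le)
  finally show ?thesis .
qed

lemma inverse_sum_inverse_less:
  fixes f :: "'a \<Rightarrow> real"
  assumes "finite T" "p \<in> T" "p' \<in> T" "p' \<noteq> p" and pos: "\<And>x. x \<in> T \<Longrightarrow> 0 < f x"
  shows "0 < (\<Sum>x\<in>T. inverse (f x))" and "inverse (\<Sum>x\<in>T. inverse (f x)) < f p"
proof -
  have less: "inverse (f p) < (\<Sum>x\<in>T. inverse (f x))"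
    using assms by (intro member_less_sum[of T p p']) auto
  moreover have "0 < inverse (f p)" using pos assms(2) by simp
  ultimately show "0 < (\<Sum>x\<in>T. inverse (f x))" by linarith
  from less_imp_inverse_less[OF less \<open>0 < inverse (f p)\<close>]
  show "inverse (\<Sum>x\<in>T. inverse (f x)) < f p" using pos assms(2) by simp
qed

lemma harmonic_step_stays_below:
  fixes d :: "'a \<Rightarrow> real"
  assumes "finite T" and other: "\<And>p. \<exists>p'\<in>T. p' \<noteq> p"
    and below: "\<And>p. p \<in> T \<Longrightarrow> c < d p" and "p \<in> T"
  shows "c < inverse (\<Sum>p\<in>T. inverse (d p - c)) + c"
    and "inverse (\<Sum>p\<in>T. inverse (d p - c)) + c < d p"
proof -
  obtain p' where "p' \<in> T" "p' \<noteq> p" using other by blast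
  then have "0 < (\<Sum>p\<in>T. inverse (d p - c))" "inverse (\<Sum>p\<in>T. inverse (d p - c)) < d p - c"
    using inverse_sum_inverse_less[of T p p' "\<lambda>p. d p - c"] assms by auto
  then show "c < inverse (\<Sum>p\<in>T. inverse (d p - c)) + c"
    and "inverse (\<Sum>p\<in>T. inverse (d p - c)) + c < d p" by simp_all
qed

lemma harmonic_step_stays_above:
  fixes d :: "'a \<Rightarrow> real"
  assumes "finite T" and other: "\<And>p. \<exists>p'\<in>T. p' \<noteq> p"
    and above: "\<And>p. p \<in> T \<Longrightarrow> d p < C" and "p \<in> T"
  shows "d p < inverse (\<Sum>p\<in>T. inverse (d p - C)) + C"
proof -
  obtain p' where "p' \<in> T" "p' \<noteq> p" using other by blast
  then have "inverse (\<Sum>p\<in>T. inverse (C - d p)) < C - d p"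
    using inverse_sum_inverse_less[of T p p' "\<lambda>p. C - d p"] assms by auto
  moreover have "(\<Sum>p\<in>T. inverse (d p - C)) = - (\<Sum>p\<in>T. inverse (C - d p))"
    by (simp add: sum_negf[symmetric] inverse_minus_eq[symmetric])
  ultimately show ?thesis by simp
qed

lemma exists_other_pair:
  assumes "3 \<le> m"
  shows "\<exists>p'\<in>pairs m. p' \<noteq> p"
proof (cases "p = (0, 1)")
  case True
  then show ?thesis using assms by (intro bexI[of _ "(0, 2)"]) (auto simp: pairs_def)
next
  case False
  then show ?thesis using assms by (intro bexI[of _ "(0, 1)"]) (auto simp: pairs_def)
qed

lemma sq_diff_pos: "inj_on q {..<m} \<Longrightarrow> (i, j) \<in> pairs m \<Longrightarrow> 0 < (q i - q j)^2"
  for q :: "nat \<Rightarrow> real"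
  by (auto simp: pairs_def inj_on_def)

context
  fixes m :: nat and q :: "nat \<Rightarrow> real"
  assumes m: "3 \<le> m" and inj: "inj_on q {..<m}"
begin

lemma musq_bounds: "0 < musq m q k \<and> (\<forall>(i, j)\<in>pairs m. musq m q k < (q i - q j)^2)"
proof -
  define d where "d = (\<lambda>(i, j). (q i - q j)^2)"
  have pos: "0 < d p" if "p \<in> pairs m" for p
    using that sq_diff_pos[OF inj] by (cases p) (auto simp: d_def)
  have "(0, 1) \<in> pairs m" using m by (simp add: pairs_def)
  have step: "c < inverse (\<Sum>p\<in>pairs m. inverse (d p - c)) + c
      \<and> (\<forall>p\<in>pairs m. inverse (\<Sum>p\<in>pairs m. inverse (d p - c)) + c < d p)"
    if "\<And>p. p \<in> pairs m \<Longrightarrow> c < d p" for c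
    using harmonic_step_stays_below[where T = "pairs m" and c = c and d = d,
        OF finite_pairs exists_other_pair[OF m] that] \<open>(0, 1) \<in> pairs m\<close> by blast
  have musq_0: "musq m q 0 = inverse (\<Sum>p\<in>pairs m. inverse (d p - 0)) + 0"
    by (simp add: d_def case_prod_unfold)
  have musq_Suc: "musq m q (Suc k) = inverse (\<Sum>p\<in>pairs m. inverse (d p - musq m q k)) + musq m q k"
    for k by (simp add: d_def case_prod_unfold)
  have "0 < musq m q k \<and> (\<forall>p\<in>pairs m. musq m q k < d p)"
  proof (induction k)
    case 0
    show ?case using step[OF pos] unfolding musq_0 by blast
  next
    case (Suc k)
    then have "\<And>p. p \<in> pairs m \<Longrightarrow> musq m q k < d p" by blast
    from step[OF this] show ?case using Suc.IH unfolding musq_Suc by (auto intro: add_pos_pos)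
  qed
  then show ?thesis by (auto simp: d_def)
qed

lemma Msq_bounds: "\<forall>(i, j)\<in>pairs m. (q i - q j)^2 < Msq m q k"
proof -
  define d where "d = (\<lambda>(i, j). (q i - q j)^2)"
  have pos: "0 < d p" if "p \<in> pairs m" for p
    using that sq_diff_pos[OF inj] by (cases p) (auto simp: d_def)
  have "\<forall>p\<in>pairs m. d p < Msq m q k"
  proof (induction k)
    case 0
    have "Msq m q 0 = (\<Sum>p\<in>pairs m. d p)"
      unfolding d_def Msq.simps by (intro sum.cong refl) (simp add: case_prod_unfold power2_commute)
    moreover have "d p < (\<Sum>p\<in>pairs m. d p)" if "p \<in> pairs m" for p
    proof -
      obtain p' where "p' \<in> pairs m" "p' \<noteq> p" using exists_other_pair[OF m] by blast
      then show ?thesis using member_less_sum[of "pairs m" p p' d] that pos by simp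
    qed
    ultimately show ?case by simp
  next
    case (Suc k)
    have Msq_Suc: "Msq m q (Suc k) = inverse (\<Sum>p\<in>pairs m. inverse (d p - Msq m q k)) + Msq m q k"
      by (simp add: d_def case_prod_unfold)
    show ?case
    proof
      fix p assume "p \<in> pairs m"
      with Suc.IH have "d p < inverse (\<Sum>p\<in>pairs m. inverse (d p - Msq m q k)) + Msq m q k"
        by (intro harmonic_step_stays_above[OF finite_pairs exists_other_pair[OF m]]) auto
      then show "d p < Msq m q (Suc k)" by (simp only: Msq_Suc)
    qed
  qed
  then show ?thesis by (auto simp: d_def)
qed

end

lemma sq_diff_eq_pair:
  fixes q :: "nat \<Rightarrow> real"
  assumes "i < m" "j < m" "i \<noteq> j"
  shows "\<exists>(a, b)\<in>pairs m. (q i - q j)^2 = (q a - q b)^2"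
proof (cases "i < j")
  case True
  with assms show ?thesis by (intro bexI[of _ "(i, j)"]) (auto simp: pairs_def)
next
  case False
  with assms show ?thesis by (intro bexI[of _ "(j, i)"]) (auto simp: pairs_def power2_commute)
qed

lemma sqrt_less_Min_abs_diff:
  fixes q :: "nat \<Rightarrow> real"
  assumes "2 \<le> m" and below: "\<forall>(i, j)\<in>pairs m. c < (q i - q j)^2"
  shows "sqrt c < Min {\<bar>q i - q j\<bar> | i j. i < m \<and> j < m \<and> i \<noteq> j}"
proof (subst Min_gr_iff)
  show "finite {\<bar>q i - q j\<bar> | i j. i < m \<and> j < m \<and> i \<noteq> j}"
    by (rule finite_subset[of _ "(\<lambda>(i, j). \<bar>q i - q j\<bar>) ` ({..<m} \<times> {..<m})"]) auto
  have "\<bar>q 0 - q 1\<bar> \<in> {\<bar>q i - q j\<bar> | i j. i < m \<and> j < m \<and> i \<noteq> j}"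
    using assms(1) by (intro CollectI exI[of _ 0] exI[of _ 1]) simp
  then show "{\<bar>q i - q j\<bar> | i j. i < m \<and> j < m \<and> i \<noteq> j} \<noteq> {}" by blast
  show "\<forall>a\<in>{\<bar>q i - q j\<bar> | i j. i < m \<and> j < m \<and> i \<noteq> j}. sqrt c < a"
  proof clarify
    fix i j assume "i < m" "j < m" "i \<noteq> j"
    then obtain a b where "(a, b) \<in> pairs m" "(q i - q j)^2 = (q a - q b)^2"
      using sq_diff_eq_pair by blast
    with below have "c < (q i - q j)^2" by auto
    then have "sqrt c < sqrt ((q i - q j)^2)" by (rule real_sqrt_less_mono)
    then show "sqrt c < \<bar>q i - q j\<bar>" by simp
  qed
qed

lemma Max_abs_diff_less_sqrt:
  fixes q :: "nat \<Rightarrow> real"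
  assumes "2 \<le> m" and above: "\<forall>(i, j)\<in>pairs m. (q i - q j)^2 < C"
  shows "Max {\<bar>q i - q j\<bar> | i j. i < m \<and> j < m} < sqrt C"
proof (subst Max_less_iff)
  show "finite {\<bar>q i - q j\<bar> | i j. i < m \<and> j < m}"
    by (rule finite_subset[of _ "(\<lambda>(i, j). \<bar>q i - q j\<bar>) ` ({..<m} \<times> {..<m})"]) auto
  have "\<bar>q 0 - q 0\<bar> \<in> {\<bar>q i - q j\<bar> | i j. i < m \<and> j < m}"
    using assms(1) by (intro CollectI exI[of _ 0]) simp
  then show "{\<bar>q i - q j\<bar> | i j. i < m \<and> j < m} \<noteq> {}" by blast
  have "(0, 1) \<in> pairs m" using assms(1) by (simp add: pairs_def)
  with above have "(q 0 - q 1)^2 < C" by auto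
  then have "0 < C" by (rule le_less_trans[OF zero_le_power2])
  show "\<forall>a\<in>{\<bar>q i - q j\<bar> | i j. i < m \<and> j < m}. a < sqrt C"
  proof clarify
    fix i j assume "i < m" "j < m"
    have "(q i - q j)^2 < C"
    proof (cases "i = j")
      case False
      with \<open>i < m\<close> \<open>j < m\<close> obtain a b where "(a, b) \<in> pairs m" "(q i - q j)^2 = (q a - q b)^2"
        using sq_diff_eq_pair by blast
      with above show ?thesis by auto
    qed (simp add: \<open>0 < C\<close>)
    then have "sqrt ((q i - q j)^2) < sqrt C" by (rule real_sqrt_less_mono)
    then show "\<bar>q i - q j\<bar> < sqrt C" by simp
  qed
qed

section \<open>Rationality of the iterates\<close>

lemma sum_inverse_nonzero:
  fixes f :: "'a \<Rightarrow> real"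
  assumes "finite T" "T \<noteq> {}" and sign: "(\<forall>x\<in>T. 0 < f x) \<or> (\<forall>x\<in>T. f x < 0)"
  shows "(\<Sum>x\<in>T. inverse (f x)) \<noteq> 0"
  using sign
proof
  assume "\<forall>x\<in>T. 0 < f x"
  then have "0 < (\<Sum>x\<in>T. inverse (f x))" using assms(1,2) by (intro sum_pos) auto
  then show ?thesis by simp
next
  assume "\<forall>x\<in>T. f x < 0"
  then have "0 < (\<Sum>x\<in>T. - inverse (f x))" using assms(1,2) by (intro sum_pos) auto
  then show ?thesis by (simp add: sum_negf)
qed

lemma rational_in_coeffs_harmonic_step:
  assumes m: "3 \<le> m" and c: "rational_in_coeffs (sorted_roots n m) c"
    and sign: "\<And>Q q. sorted_roots n m Q q \<Longrightarrow> (\<forall>(i, j)\<in>pairs m. c Q q < (q i - q j)^2)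
      \<or> (\<forall>(i, j)\<in>pairs m. (q i - q j)^2 < c Q q)"
  shows "rational_in_coeffs (sorted_roots n m)
    (\<lambda>Q q. inverse (\<Sum>(i, j)\<in>pairs m. inverse ((q i - q j)^2 - c Q q)) + c Q q)"
proof -
  have "0 < m" using m by simp
  have ne: "(q i - q j)^2 \<noteq> c Q q" if "sorted_roots n m Q q" "(i, j) \<in> pairs m" for Q q i j
    using sign[OF that(1)] that(2) by fastforce
  have nz: "(\<Sum>(i, j)\<in>pairs m. inverse ((q i - q j)^2 - c Q q)) \<noteq> 0"
    if "sorted_roots n m Q q" for Q q
  proof -
    have "(0, 1) \<in> pairs m" using m by (simp add: pairs_def)
    then show ?thesis
      using sign[OF that] unfolding case_prod_unfold
      by (intro sum_inverse_nonzero) (auto simp: case_prod_unfold)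
  qed
  show ?thesis
    by (rule rational_in_coeffs_add[OF rational_in_coeffs_inverse[OF
          rational_in_coeffs_sum_inverse_sq_diff[OF \<open>0 < m\<close> c ne] nz] c])
qed

lemma rational_in_coeffs_musq:
  assumes m: "3 \<le> m"
  shows "rational_in_coeffs (sorted_roots n m) (\<lambda>Q q. musq m q k)"
proof (induction k)
  case 0
  show ?case
  proof (rule rational_in_coeffs_cong[OF rational_in_coeffs_harmonic_step[OF m rational_in_coeffs_const]])
    fix Q q assume "sorted_roots n m Q q"
    then have "inj_on q {..<m}" using m by (intro sorted_roots_inj) simp_all
    then show "(\<forall>(i, j)\<in>pairs m. 0 < (q i - q j)^2) \<or> (\<forall>(i, j)\<in>pairs m. (q i - q j)^2 < 0)"
      using sq_diff_pos by blast
  qed simp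
next
  case (Suc k)
  show ?case
  proof (rule rational_in_coeffs_cong[OF rational_in_coeffs_harmonic_step[OF m Suc.IH]])
    fix Q q assume "sorted_roots n m Q q"
    then have "inj_on q {..<m}" using m by (intro sorted_roots_inj) simp_all
    then show "(\<forall>(i, j)\<in>pairs m. musq m q k < (q i - q j)^2)
        \<or> (\<forall>(i, j)\<in>pairs m. (q i - q j)^2 < musq m q k)"
      using musq_bounds[OF m] by blast
  qed simp
qed

lemma rational_in_coeffs_Msq:
  assumes m: "3 \<le> m"
  shows "rational_in_coeffs (sorted_roots n m) (\<lambda>Q q. Msq m q k)"
proof (induction k)
  case 0
  have "Msq m q 0 = power_sum (pairs m) (\<lambda>(i, j). (q i - q j)^2) 1" for q
    by (simp add: power_sum_def case_prod_unfold power2_commute)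
  then show ?case
    using rational_in_coeffs_power_sum_sq_diff[of m n 1] m by simp
next
  case (Suc k)
  show ?case
  proof (rule rational_in_coeffs_cong[OF rational_in_coeffs_harmonic_step[OF m Suc.IH]])
    fix Q q assume "sorted_roots n m Q q"
    then have "inj_on q {..<m}" using m by (intro sorted_roots_inj) simp_all
    then show "(\<forall>(i, j)\<in>pairs m. Msq m q k < (q i - q j)^2)
        \<or> (\<forall>(i, j)\<in>pairs m. (q i - q j)^2 < Msq m q k)"
      using Msq_bounds[OF m] by blast
  qed simp
qed

lemma rational_expressions_musq_Msq:
  assumes "3 \<le> m"
  shows "\<exists>R S :: rexp. \<forall>(Q :: real poly) (q :: nat \<Rightarrow> real).
    all_roots_real Q \<and> degree Q = n \<and> (\<forall>i j. i < j \<and> j < m \<longrightarrow> q i < q j)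
    \<and> {x. poly Q x = 0} = q ` {..<m}
    \<longrightarrow> reval R (coeff Q) = Some (musq m q k) \<and> reval S (coeff Q) = Some (Msq m q k)"
  using rational_in_coeffs_musq[OF assms, of n k] rational_in_coeffs_Msq[OF assms, of n k]
  unfolding rational_in_coeffs_def sorted_roots_def by blast

theorem mainTheorem6:
  fixes P :: "real poly" and m :: nat and p :: "nat \<Rightarrow> real"
  assumes real_roots: "all_roots_real P"
    and m3: "m \<ge> 3"
    and p_mono: "\<And>i j. i < j \<Longrightarrow> j < m \<Longrightarrow> p i < p j"
    and p_roots: "{x. poly P x = 0} = p ` {..<m}"
  shows "(\<forall>k. 0 < musq m p k
             \<and> sqrt (musq m p k) < Min {\<bar>p i - p j\<bar> | i j. i < m \<and> j < m \<and> i \<noteq> j}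
             \<and> Max {\<bar>p i - p j\<bar> | i j. i < m \<and> j < m} < sqrt (Msq m p k))
       \<and> (\<forall>k. \<exists>R S :: rexp.
             \<forall>(Q :: real poly) (q :: nat \<Rightarrow> real).
               all_roots_real Q \<and> degree Q = degree P
               \<and> (\<forall>i j. i < j \<and> j < m \<longrightarrow> q i < q j)
               \<and> {x. poly Q x = 0} = q ` {..<m}
               \<longrightarrow> reval R (coeff Q) = Some (musq m q k)
                 \<and> reval S (coeff Q) = Some (Msq m q k))"
proof (intro conjI allI)
  \<comment> \<open>The bounds only use that the \<open>p i\<close> are distinct, and the rationality statement
    is uniform in \<open>Q\<close>.\<close>
  have inj: "inj_on p {..<m}"
    by (intro linorder_inj_onI') (use p_mono in fastforce)
  have m2: "2 \<le> m" using m3 by simp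
  fix k
  have mu: "0 < musq m p k \<and> (\<forall>(i, j)\<in>pairs m. musq m p k < (p i - p j)^2)"
    by (rule musq_bounds[OF m3 inj])
  then show "0 < musq m p k" ..
  show "sqrt (musq m p k) < Min {\<bar>p i - p j\<bar> | i j. i < m \<and> j < m \<and> i \<noteq> j}"
    using mu by (intro sqrt_less_Min_abs_diff[OF m2]) blast
  show "Max {\<bar>p i - p j\<bar> | i j. i < m \<and> j < m} < sqrt (Msq m p k)"
    by (rule Max_abs_diff_less_sqrt[OF m2 Msq_bounds[OF m3 inj]])
qed (rule rational_expressions_musq_Msq[OF m3])

end
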